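(* Let $(X,d,f)$ be a topological dynamical system ($(X,d)$ compact metric, $f:X\to X$ continuous), let $m$ be an ergodic $f$-invariant Borel probability measure, let $\xi$ be a finite measurable partition of $X$, let $\gamma\in(0,1)$ and $k\in\mathbb N$. For $n\in\mathbb N$ let \[ \Lambda^n(m)=\Big\{x\in X:\ f^q(x)\in\xi(x)\text{ for some }q\in[n,(1+\gamma)n]\cap\mathbb N,\ \text{and } D(\mathscr E_l(x),m)<\tfrac1k\text{ for all }l\ge n\Big\}, \] where $\xi(x)$ is the element of $\xi$ containing $x$. Then $\lim_{n\to\infty}m(\Lambda^n(m))=1$.
   Context: $\mathscr E_l(x)=\frac1l\sum_{i=0}^{l-1}\delta_{f^ix}$. Fix a dense sequence $\{\varphi_i\}_{i\ge1}$ in $C(X)$ and let $D(\mu,\nu)=\sum_{i\ge1}\frac{|\int\varphi_id\mu-\int\varphi_id\nu|}{2^{i+1}\|\varphi_i\|}$ on Borel probability measures. *)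

theory Defs
  imports "HOL-Probability.Probability"
begin

definition sup_norm :: "('a \<Rightarrow> real) \<Rightarrow> real" where
  "sup_norm g = (SUP x. \<bar>g x\<bar>)"

text \<open>The metric D on Borel probability measures, relative to the sequence phi
  (indexed from 0 here; phi 0 plays the role of phi_1, weight 2^(i+2) = 2^((i+1)+1)).\<close>
definition Dmet :: "(nat \<Rightarrow> 'a \<Rightarrow> real) \<Rightarrow> 'a measure \<Rightarrow> 'a measure \<Rightarrow> real" where
  "Dmet \<phi> \<mu> \<nu> = (\<Sum>i. \<bar>(\<integral>x. \<phi> i x \<partial>\<mu>) - (\<integral>x. \<phi> i x \<partial>\<nu>)\<bar>
                        / (2 ^ (i + 2) * sup_norm (\<phi> i)))"

text \<open>Empirical measure E_l(x) = (1/l) sum_{i<l} delta_{f^i x}.\<close>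
definition empirical :: "('a \<Rightarrow> 'a) \<Rightarrow> nat \<Rightarrow> 'a \<Rightarrow> 'a measure" where
  "empirical f l x = measure_pmf (pmf_of_multiset (image_mset (\<lambda>i. (f ^^ i) x) (mset_set {..<l})))"

definition invariant_measure :: "('a \<Rightarrow> 'a) \<Rightarrow> 'a measure \<Rightarrow> bool" where
  "invariant_measure f m \<longleftrightarrow> f \<in> measurable m m \<and> distr m m f = m"

definition ergodic_measure :: "('a \<Rightarrow> 'a) \<Rightarrow> 'a measure \<Rightarrow> bool" where
  "ergodic_measure f m \<longleftrightarrow> invariant_measure f m \<and>
     (\<forall>A \<in> sets m. f -` A = A \<longrightarrow> measure m A = 0 \<or> measure m A = 1)"

definition finite_measurable_partition :: "'a::topological_space set set \<Rightarrow> bool" where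
  "finite_measurable_partition P \<longleftrightarrow> finite P \<and> P \<subseteq> sets borel \<and> \<Union>P = UNIV \<and>
     (\<forall>A\<in>P. \<forall>B\<in>P. A \<noteq> B \<longrightarrow> A \<inter> B = {})"

definition Lambda_set :: "(nat \<Rightarrow> 'a \<Rightarrow> real) \<Rightarrow> ('a \<Rightarrow> 'a) \<Rightarrow> 'a set set \<Rightarrow> real \<Rightarrow> nat
     \<Rightarrow> 'a measure \<Rightarrow> nat \<Rightarrow> 'a set" where
  "Lambda_set \<phi> f P \<gamma> k m n = {x.
     (\<exists>q::nat. n \<le> q \<and> real q \<le> (1 + \<gamma>) * real n \<and> (\<exists>A\<in>P. x \<in> A \<and> (f ^^ q) x \<in> A)) \<and>
     (\<forall>l\<ge>n. Dmet \<phi> (empirical f l x) m < 1 / real k)}"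

end

theory Submission
  imports Defs
begin

text \<open>By Birkhoff's ergodic theorem, for almost every \<open>x\<close> the time averages of each \<open>\<phi>\<^sub>i\<close> and of
  the indicator of each cell of \<open>\<xi>\<close> converge to their space averages, and \<open>x\<close> lies in a cell \<open>A\<close>
  of positive measure. The first fact makes \<open>D(E\<^sub>l(x), m) \<rightarrow> 0\<close> by dominated convergence of the
  series defining \<open>D\<close>. The second makes the number of visits to \<open>A\<close> grow like \<open>l \<cdot> m(A)\<close>, so
  some visit happens between times \<open>n\<close> and \<open>(1 + \<gamma>) n\<close> once \<open>n\<close> is large. Hence almost every
  point lies in \<open>\<Lambda>\<^sup>n(m)\<close> for all large \<open>n\<close>, and \<open>m(\<Lambda>\<^sup>n(m)) \<rightarrow> 1\<close>.

  Birkhoff's theorem is proved for bounded observables: the set where \<open>limsup S\<^sub>n g / n > s\<close> is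
  invariant, and if it had full measure then almost every orbit would start with a block of
  average above \<open>s\<close>; tiling orbits by such blocks and integrating gives \<open>s \<le> \<integral>g\<close>.\<close>


lemma sum_lessThan_add:
  "(\<Sum>i<n + k. (a :: nat \<Rightarrow> real) i) = (\<Sum>i<n. a i) + (\<Sum>i<k. a (n + i))"
  by (induction k) (auto simp: add.assoc)

lemma sum_ge_of_blocks:
  fixes a :: "nat \<Rightarrow> real"
  assumes bound: "\<And>i. \<bar>a i\<bar> \<le> C" "\<bar>t\<bar> \<le> C"
    and blocks: "\<And>j. \<exists>n. 1 \<le> n \<and> n \<le> M \<and> real n * t \<le> (\<Sum>i<n. a (j + i))"
  shows "real L * t - 2 * real M * C \<le> (\<Sum>i<L. a (j + i))"
proof (induction L arbitrary: j rule: less_induct)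
  case (less L)
  obtain n where n: "1 \<le> n" "n \<le> M" "real n * t \<le> (\<Sum>i<n. a (j + i))"
    using blocks by blast
  show ?case
  proof (cases "n \<le> L")
    case True
    have "real (L - n) * t - 2 * real M * C \<le> (\<Sum>i<L - n. a (j + n + i))"
      using less[of "L - n" "j + n"] n True by auto
    moreover have "(\<Sum>i<L. a (j + i)) = (\<Sum>i<n. a (j + i)) + (\<Sum>i<L - n. a (j + n + i))"
      using sum_lessThan_add[of "\<lambda>i. a (j + i)" n "L - n"] True by (simp add: add.assoc)
    moreover have "real L * t = real n * t + real (L - n) * t"
      using True by (simp add: of_nat_diff algebra_simps)
    ultimately show ?thesis using n by linarith
  next
    case False
    have "(\<Sum>i<L. - C) \<le> (\<Sum>i<L. a (j + i))"
      using abs_le_D2[OF bound(1)] by (intro sum_mono) (simp add: minus_le_iff)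
    then have "- (real L * C) \<le> (\<Sum>i<L. a (j + i))" by simp
    moreover have "real L * t \<le> real L * C"
      using bound(2) by (intro mult_left_mono) auto
    moreover have "real L * C \<le> real M * C"
      using False n(2) bound(2) by (intro mult_right_mono) auto
    ultimately show ?thesis by linarith
  qed
qed

definition birkhoff_sum :: "('a \<Rightarrow> 'a) \<Rightarrow> ('a \<Rightarrow> real) \<Rightarrow> nat \<Rightarrow> 'a \<Rightarrow> real" where
  "birkhoff_sum f g n x = (\<Sum>i<n. g ((f ^^ i) x))"

lemma birkhoff_sum_Suc: "birkhoff_sum f g (Suc n) x = g x + birkhoff_sum f g n (f x)"
  unfolding birkhoff_sum_def sum.lessThan_Suc_shift
  by (simp add: funpow_Suc_right del: funpow.simps)

lemma birkhoff_sum_funpow: "birkhoff_sum f g n ((f ^^ j) x) = (\<Sum>i<n. g ((f ^^ (j + i)) x))"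
  by (simp add: birkhoff_sum_def funpow_add add.commute)

lemma birkhoff_sum_uminus: "birkhoff_sum f (\<lambda>y. - g y) n x = - birkhoff_sum f g n x"
  by (simp add: birkhoff_sum_def sum_negf)

lemma birkhoff_sum_ge_of_blocks:
  assumes "\<And>y. \<bar>g y\<bar> \<le> C" and "\<bar>t\<bar> \<le> C"
    and "\<And>y. \<exists>n. 1 \<le> n \<and> n \<le> M \<and> real n * t \<le> birkhoff_sum f g n y"
  shows "real L * t - 2 * real M * C \<le> birkhoff_sum f g L x"
proof -
  have "\<exists>n. 1 \<le> n \<and> n \<le> M \<and> real n * t \<le> (\<Sum>i<n. g ((f ^^ (j + i)) x))" for j
    using assms(3)[of "(f ^^ j) x"] by (simp add: birkhoff_sum_funpow)
  from sum_ge_of_blocks[of "\<lambda>i. g ((f ^^ i) x)", OF assms(1,2) this, of L 0]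
  show ?thesis by (simp add: birkhoff_sum_def)
qed

lemma eventually_le_real_mult:
  assumes "0 < d"
  shows "eventually (\<lambda>n. c \<le> real n * d) sequentially"
proof -
  obtain N :: nat where "c / d < real N" using reals_Archimedean2 by blast
  then have "c \<le> real n * d" if "N \<le> n" for n
    using assms that by (smt (verit) mult_right_mono of_nat_mono pos_divide_less_eq)
  then show ?thesis by (rule eventually_sequentiallyI)
qed

lemma frequently_sequentially_Suc:
  "frequently (\<lambda>n. P (Suc n)) sequentially \<longleftrightarrow> frequently P sequentially"
  using eventually_sequentially_Suc[of "\<lambda>n. \<not> P n"] by (simp add: frequently_def)

lemma frequently_gt_linear_Suc_shift:
  fixes u v :: "nat \<Rightarrow> real"
  assumes shift: "\<And>n. \<bar>u (Suc n) - v n\<bar> \<le> B" and "r' < r"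
    and freq: "\<exists>\<^sub>F n in sequentially. real n * r < v n"
  shows "\<exists>\<^sub>F n in sequentially. real n * r' < u n"
proof -
  have "\<forall>\<^sub>F n in sequentially. B + r' \<le> real n * (r - r')"
    using \<open>r' < r\<close> by (intro eventually_le_real_mult) simp
  then have "\<forall>\<^sub>F n in sequentially. real n * r < v n \<longrightarrow> real (Suc n) * r' < u (Suc n)"
  proof eventually_elim
    fix n assume n: "B + r' \<le> real n * (r - r')"
    have "real (Suc n) * r' = real n * r' + r'" "real n * (r - r') = real n * r - real n * r'"
      by (simp_all add: algebra_simps)
    with n abs_le_D2[OF shift[of n]]
    show "real n * r < v n \<longrightarrow> real (Suc n) * r' < u (Suc n)" by linarith
  qed
  then have "\<exists>\<^sub>F n in sequentially. real (Suc n) * r' < u (Suc n)"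
    using freq by (rule frequently_mp)
  then show ?thesis using frequently_sequentially_Suc[of "\<lambda>n. real n * r' < u n"] by simp
qed

lemma frequently_gt_linear_Suc_unshift:
  fixes u v :: "nat \<Rightarrow> real"
  assumes shift: "\<And>n. \<bar>u (Suc n) - v n\<bar> \<le> B" and "r' < r"
    and freq: "\<exists>\<^sub>F n in sequentially. real n * r < u n"
  shows "\<exists>\<^sub>F n in sequentially. real n * r' < v n"
proof -
  have "\<exists>\<^sub>F n in sequentially. real (Suc n) * r < u (Suc n)"
    using freq frequently_sequentially_Suc[of "\<lambda>n. real n * r < u n"] by simp
  moreover have "\<forall>\<^sub>F n in sequentially. B - r \<le> real n * (r - r')"
    using \<open>r' < r\<close> by (intro eventually_le_real_mult) simp
  then have "\<forall>\<^sub>F n in sequentially. real (Suc n) * r < u (Suc n) \<longrightarrow> real n * r' < v n"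
  proof eventually_elim
    fix n assume n: "B - r \<le> real n * (r - r')"
    have "real (Suc n) * r = real n * r + r" "real n * (r - r') = real n * r - real n * r'"
      by (simp_all add: algebra_simps)
    with n abs_le_D1[OF shift[of n]]
    show "real (Suc n) * r < u (Suc n) \<longrightarrow> real n * r' < v n" by (smt (verit))
  qed
  ultimately show ?thesis by (rule frequently_rev_mp)
qed

locale ergodic_system = prob_space m for m :: "'a measure" +
  fixes f :: "'a \<Rightarrow> 'a"
  assumes measurable_map: "f \<in> measurable m m"
    and distr_map: "distr m m f = m"
    and space_eq_UNIV: "space m = UNIV"
    and invariant_set_trivial:
      "\<And>A. A \<in> sets m \<Longrightarrow> f -` A = A \<Longrightarrow> measure m A = 0 \<or> measure m A = 1"
begin

lemma measurable_funpow: "f ^^ i \<in> measurable m m"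
  by (induction i) (auto intro: measurable_compose[OF _ measurable_map])

lemma integral_funpow:
  fixes h :: "'a \<Rightarrow> real"
  assumes "h \<in> borel_measurable m"
  shows "(\<integral>x. h ((f ^^ i) x) \<partial>m) = (\<integral>x. h x \<partial>m)"
proof (induction i)
  case (Suc i)
  have "(\<lambda>y. h ((f ^^ i) y)) \<in> borel_measurable m"
    using assms by (rule measurable_compose[OF measurable_funpow])
  then have "(\<integral>x. h ((f ^^ i) (f x)) \<partial>m) = (\<integral>y. h ((f ^^ i) y) \<partial>distr m m f)"
    by (simp add: integral_distr[OF measurable_map])
  with Suc show ?case
    by (simp add: distr_map funpow_Suc_right del: funpow.simps)
qed simp

lemma birkhoff_sum_measurable [measurable]:
  "g \<in> borel_measurable m \<Longrightarrow> birkhoff_sum f g n \<in> borel_measurable m"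
  unfolding birkhoff_sum_def
  by (auto intro!: borel_measurable_sum measurable_compose[OF measurable_funpow])

lemma integrable_bounded:
  "g \<in> borel_measurable m \<Longrightarrow> (\<And>x. \<bar>g x\<bar> \<le> (B :: real)) \<Longrightarrow> integrable m g"
  by (rule integrable_const_bound[where B = B]) auto

lemma integral_birkhoff_sum:
  assumes "g \<in> borel_measurable m" and "\<And>x. \<bar>g x\<bar> \<le> B"
  shows "(\<integral>x. birkhoff_sum f g n x \<partial>m) = real n * (\<integral>x. g x \<partial>m)"
proof -
  have "integrable m (\<lambda>x. g ((f ^^ i) x))" for i
    using assms by (intro integrable_bounded[where B = B] measurable_compose[OF measurable_funpow])
  then have "(\<integral>x. birkhoff_sum f g n x \<partial>m) = (\<Sum>i<n. \<integral>x. g ((f ^^ i) x) \<partial>m)"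
    unfolding birkhoff_sum_def by (rule Bochner_Integration.integral_sum)
  then show ?thesis using integral_funpow[OF assms(1)] by simp
qed

text \<open>Integrating the tiling bound over orbits of every length L shows L s \<le> L \<integral>g + 2MC.\<close>
lemma integral_ge_of_blocks:
  assumes g: "g \<in> borel_measurable m" "\<And>y. \<bar>g y\<bar> \<le> C" and "\<bar>s\<bar> \<le> C"
    and blocks: "\<And>y. \<exists>n. 1 \<le> n \<and> n \<le> M \<and> real n * s \<le> birkhoff_sum f g n y"
  shows "s \<le> (\<integral>x. g x \<partial>m)"
proof (rule ccontr)
  assume "\<not> ?thesis"
  then obtain L :: nat where L: "2 * real M * C / (s - (\<integral>x. g x \<partial>m)) < real L"
    using reals_Archimedean2 by blast
  have "(\<integral>x. real L * s - 2 * real M * C \<partial>m) \<le> (\<integral>x. birkhoff_sum f g L x \<partial>m)"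
  proof (rule integral_mono)
    show "integrable m (birkhoff_sum f g L)"
      unfolding birkhoff_sum_def using g
      by (intro Bochner_Integration.integrable_sum integrable_bounded[where B = C]
          measurable_compose[OF measurable_funpow])
  qed (use birkhoff_sum_ge_of_blocks[OF g(2) \<open>\<bar>s\<bar> \<le> C\<close> blocks] in auto)
  then have "real L * s - 2 * real M * C \<le> real L * (\<integral>x. g x \<partial>m)"
    by (simp add: integral_birkhoff_sum[OF g] prob_space)
  with L \<open>\<not> ?thesis\<close> show False by (simp add: field_simps)
qed

text \<open>Raising \<open>g\<close> to \<open>C\<close> off \<open>E\<close> makes every point start a block; this costs at most
  \<open>2 C (1 - m(E))\<close> in the integral.\<close>
lemma integral_ge_of_blocks_on:
  assumes g: "g \<in> borel_measurable m" "\<And>y. \<bar>g y\<bar> \<le> B"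
    and E: "E \<in> sets m" and "B \<le> C" and "\<bar>s\<bar> \<le> C" and "1 \<le> M"
    and blocks: "\<And>y. y \<in> E \<Longrightarrow> \<exists>n. 1 \<le> n \<and> n \<le> M \<and> real n * s < birkhoff_sum f g n y"
  shows "s \<le> (\<integral>x. g x \<partial>m) + 2 * C * (1 - measure m E)"
proof -
  define g' where "g' y = (if y \<in> E then g y else C)" for y
  have gC: "\<bar>g y\<bar> \<le> C" for y
    using g(2)[of y] \<open>B \<le> C\<close> by linarith
  have g': "g' \<in> borel_measurable m" "\<And>y. \<bar>g' y\<bar> \<le> C"
    using g E gC \<open>\<bar>s\<bar> \<le> C\<close> unfolding g'_def by (auto intro: measurable_If_set)
  have "\<exists>n. 1 \<le> n \<and> n \<le> M \<and> real n * s \<le> birkhoff_sum f g' n y" for y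
  proof (cases "y \<in> E")
    case True
    then obtain n where n: "1 \<le> n" "n \<le> M" "real n * s < birkhoff_sum f g n y"
      using blocks by blast
    have "birkhoff_sum f g n y \<le> birkhoff_sum f g' n y"
      unfolding birkhoff_sum_def g'_def using g(2) \<open>B \<le> C\<close>
      by (intro sum_mono) (smt (verit))
    with n show ?thesis by (intro exI[of _ n]) auto
  next
    case False
    then show ?thesis
      using \<open>1 \<le> M\<close> \<open>\<bar>s\<bar> \<le> C\<close> by (intro exI[of _ 1]) (auto simp: g'_def birkhoff_sum_def)
  qed
  then have "s \<le> (\<integral>x. g' x \<partial>m)"
    using integral_ge_of_blocks[OF g' \<open>\<bar>s\<bar> \<le> C\<close>] by blast
  also have "\<dots> \<le> (\<integral>x. g x + 2 * C * indicator (space m - E) x \<partial>m)"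
  proof (rule integral_mono)
    show "integrable m g'" using integrable_bounded[OF g'] .
    show "integrable m (\<lambda>x. g x + 2 * C * indicator (space m - E) x)"
      using integrable_bounded[OF g] E by (auto simp: emeasure_eq_measure)
    show "g' x \<le> g x + 2 * C * indicator (space m - E) x" for x
      using g(2)[of x] \<open>B \<le> C\<close> by (auto simp: g'_def space_eq_UNIV indicator_def)
  qed
  also have "\<dots> = (\<integral>x. g x \<partial>m) + 2 * C * (1 - measure m E)"
    using integrable_bounded[OF g] E by (simp add: emeasure_eq_measure prob_compl Int_absorb2)
  finally show ?thesis .
qed

end

text \<open>The points with \<open>limsup\<^sub>n S\<^sub>n g x / n > s\<close>; the margins \<open>1 / (j + 1)\<close> make it measurable.\<close>
definition birkhoff_excess_set :: "('a \<Rightarrow> 'a) \<Rightarrow> ('a \<Rightarrow> real) \<Rightarrow> real \<Rightarrow> 'a set" where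
  "birkhoff_excess_set f g s = {x. \<exists>j :: nat.
     \<exists>\<^sub>F n in sequentially. real n * (s + 1 / (real j + 1)) < birkhoff_sum f g n x}"

lemma birkhoff_excess_set_invariant:
  assumes "\<And>x. \<bar>g x\<bar> \<le> B"
  shows "f -` birkhoff_excess_set f g s = birkhoff_excess_set f g s"
proof (intro set_eqI iffI)
  have shift: "\<bar>birkhoff_sum f g (Suc n) x - birkhoff_sum f g n (f x)\<bar> \<le> B" for n x
    by (simp add: birkhoff_sum_Suc assms)
  have margin: "s + 1 / (real (2 * j + 1) + 1) < s + 1 / (real j + 1)" for j :: nat
    by (simp add: field_simps)
  fix x
  show "x \<in> birkhoff_excess_set f g s" if "x \<in> f -` birkhoff_excess_set f g s"
  proof -
    from that obtain j where
      "\<exists>\<^sub>F n in sequentially. real n * (s + 1 / (real j + 1)) < birkhoff_sum f g n (f x)"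
      by (auto simp: birkhoff_excess_set_def)
    from frequently_gt_linear_Suc_shift[OF shift margin this] show ?thesis
      unfolding birkhoff_excess_set_def by blast
  qed
  show "x \<in> f -` birkhoff_excess_set f g s" if "x \<in> birkhoff_excess_set f g s"
  proof -
    from that obtain j where
      "\<exists>\<^sub>F n in sequentially. real n * (s + 1 / (real j + 1)) < birkhoff_sum f g n x"
      by (auto simp: birkhoff_excess_set_def)
    from frequently_gt_linear_Suc_unshift[OF shift margin this] show ?thesis
      unfolding birkhoff_excess_set_def by blast
  qed
qed

context ergodic_system
begin

lemma birkhoff_excess_set_measurable:
  assumes "g \<in> borel_measurable m"
  shows "birkhoff_excess_set f g s \<in> sets m"
proof -
  have "Measurable.pred m (\<lambda>x. \<exists>j :: nat. \<forall>N :: nat. \<exists>n\<ge>N.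
          real n * (s + 1 / (real j + 1)) < birkhoff_sum f g n x)"
    using assms by measurable
  then show ?thesis
    unfolding birkhoff_excess_set_def frequently_sequentially pred_def by (simp add: space_eq_UNIV)
qed

lemma integral_ge_of_AE_block:
  assumes g: "g \<in> borel_measurable m" "\<And>x. \<bar>g x\<bar> \<le> B"
    and full: "measure m {x. \<exists>n\<ge>1. real n * s < birkhoff_sum f g n x} = 1"
  shows "s \<le> (\<integral>x. g x \<partial>m)"
proof -
  define E where "E M = {x. \<exists>n. 1 \<le> n \<and> n \<le> M \<and> real n * s < birkhoff_sum f g n x}" for M
  have E_sets: "E M \<in> sets m" for M
  proof -
    have "Measurable.pred m (\<lambda>x. \<exists>n. 1 \<le> n \<and> n \<le> M \<and> real n * s < birkhoff_sum f g n x)"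
      using g(1) by measurable
    then show ?thesis unfolding E_def pred_def by (simp add: space_eq_UNIV)
  qed
  have "(\<Union>M. E M) = {x. \<exists>n\<ge>1. real n * s < birkhoff_sum f g n x}"
    unfolding E_def by blast
  moreover have "incseq E"
    unfolding incseq_def E_def by fastforce
  ultimately have "(\<lambda>M. measure m (E M)) \<longlonglongrightarrow> 1"
    using finite_Lim_measure_incseq[of E] E_sets full by auto
  then have "(\<lambda>M. (\<integral>x. g x \<partial>m) + 2 * max B \<bar>s\<bar> * (1 - measure m (E M)))
      \<longlonglongrightarrow> (\<integral>x. g x \<partial>m) + 2 * max B \<bar>s\<bar> * (1 - 1)"
    by (intro tendsto_intros)
  moreover have "s \<le> (\<integral>x. g x \<partial>m) + 2 * max B \<bar>s\<bar> * (1 - measure m (E M))" if "1 \<le> M" for M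
    by (rule integral_ge_of_blocks_on[OF g E_sets _ _ that]) (auto simp: E_def)
  ultimately show ?thesis
    by (intro LIMSEQ_le_const) auto
qed

text \<open>The excess set is invariant, so ergodicity forces measure 0 or 1, and 1 is excluded since
  almost every orbit would then start with a block of average larger than \<open>s > \<integral>g\<close>.\<close>
lemma birkhoff_excess_set_null:
  assumes g: "g \<in> borel_measurable m" "\<And>x. \<bar>g x\<bar> \<le> B" and "(\<integral>x. g x \<partial>m) < s"
  shows "measure m (birkhoff_excess_set f g s) = 0"
proof -
  let ?U = "birkhoff_excess_set f g s"
  let ?V = "{x. \<exists>n\<ge>1. real n * s < birkhoff_sum f g n x}"
  have V_sets: "?V \<in> sets m"
  proof -
    have "Measurable.pred m (\<lambda>x. \<exists>n\<ge>1. real n * s < birkhoff_sum f g n x)"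
      using g(1) by measurable
    then show ?thesis unfolding pred_def by (simp add: space_eq_UNIV)
  qed
  have "?U \<subseteq> ?V"
  proof
    fix x assume "x \<in> ?U"
    then obtain j where "\<exists>\<^sub>F n in sequentially. real n * (s + 1 / (real j + 1)) < birkhoff_sum f g n x"
      by (auto simp: birkhoff_excess_set_def)
    then obtain n where "1 \<le> n" "real n * (s + 1 / (real j + 1)) < birkhoff_sum f g n x"
      unfolding frequently_sequentially by blast
    moreover have "real n * s \<le> real n * (s + 1 / (real j + 1))"
      by (intro mult_left_mono) auto
    ultimately show "x \<in> ?V" by (smt (verit) mem_Collect_eq)
  qed
  then have "measure m ?U \<le> measure m ?V"
    using V_sets by (intro finite_measure_mono)
  moreover have "measure m ?V \<noteq> 1"
    using integral_ge_of_AE_block[OF g] assms(3) by force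
  ultimately have "measure m ?U \<noteq> 1"
    using prob_le_1[of ?V] by linarith
  moreover have "f -` ?U = ?U"
    using g(2) by (rule birkhoff_excess_set_invariant)
  ultimately show ?thesis
    using invariant_set_trivial[OF birkhoff_excess_set_measurable[OF g(1)]] by blast
qed

lemma AE_eventually_birkhoff_sum_le:
  assumes g: "g \<in> borel_measurable m" "\<And>x. \<bar>g x\<bar> \<le> B" and "(\<integral>x. g x \<partial>m) < t"
  shows "AE x in m. \<forall>\<^sub>F n in sequentially. birkhoff_sum f g n x \<le> real n * t"
proof -
  define s where "s = ((\<integral>x. g x \<partial>m) + t) / 2"
  have "(\<integral>x. g x \<partial>m) < s" "s < t"
    using assms(3) by (auto simp: s_def)
  obtain j :: nat where j: "1 / (real j + 1) < t - s"
    using reals_Archimedean[of "t - s"] \<open>s < t\<close> by (auto simp: inverse_eq_divide add.commute)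
  have "birkhoff_excess_set f g s \<in> null_sets m"
    using birkhoff_excess_set_null[OF g \<open>(\<integral>x. g x \<partial>m) < s\<close>] birkhoff_excess_set_measurable[OF g(1)]
    by (intro null_setsI) (auto simp: emeasure_eq_measure)
  from AE_not_in[OF this] show ?thesis
  proof eventually_elim
    fix x assume "x \<notin> birkhoff_excess_set f g s"
    then have "\<forall>\<^sub>F n in sequentially. birkhoff_sum f g n x \<le> real n * (s + 1 / (real j + 1))"
      by (auto simp: birkhoff_excess_set_def not_frequently not_less)
    then show "\<forall>\<^sub>F n in sequentially. birkhoff_sum f g n x \<le> real n * t"
    proof (rule eventually_mono)
      fix n assume "birkhoff_sum f g n x \<le> real n * (s + 1 / (real j + 1))"
      moreover have "real n * (s + 1 / (real j + 1)) \<le> real n * t"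
        using j by (intro mult_left_mono) auto
      ultimately show "birkhoff_sum f g n x \<le> real n * t" by linarith
    qed
  qed
qed

theorem AE_birkhoff_average_tendsto:
  assumes g: "g \<in> borel_measurable m" "\<And>x. \<bar>g x\<bar> \<le> B"
  shows "AE x in m. (\<lambda>n. birkhoff_sum f g n x / real n) \<longlonglongrightarrow> (\<integral>x. g x \<partial>m)"
proof -
  define I where "I = (\<integral>x. g x \<partial>m)"
  define \<delta> where "\<delta> j = 1 / (real j + 1)" for j :: nat
  have \<delta>_pos: "0 < \<delta> j" for j by (simp add: \<delta>_def)
  have upper: "AE x in m. \<forall>j. \<forall>\<^sub>F n in sequentially. birkhoff_sum f g n x \<le> real n * (I + \<delta> j)"
    unfolding AE_all_countable
    using AE_eventually_birkhoff_sum_le[OF g] \<delta>_pos by (simp add: I_def)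
  have "AE x in m. \<forall>j. \<forall>\<^sub>F n in sequentially.
          birkhoff_sum f (\<lambda>y. - g y) n x \<le> real n * (- I + \<delta> j)"
    unfolding AE_all_countable using g \<delta>_pos
    by (intro allI AE_eventually_birkhoff_sum_le[where B = B]) (auto simp: I_def)
  then have lower: "AE x in m. \<forall>j. \<forall>\<^sub>F n in sequentially. real n * (I - \<delta> j) \<le> birkhoff_sum f g n x"
    by (simp add: birkhoff_sum_uminus algebra_simps)
  show ?thesis
    unfolding I_def[symmetric] using upper lower
  proof eventually_elim
    fix x
    assume up: "\<forall>j. \<forall>\<^sub>F n in sequentially. birkhoff_sum f g n x \<le> real n * (I + \<delta> j)"
      and lo: "\<forall>j. \<forall>\<^sub>F n in sequentially. real n * (I - \<delta> j) \<le> birkhoff_sum f g n x"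
    show "(\<lambda>n. birkhoff_sum f g n x / real n) \<longlonglongrightarrow> I"
    proof (rule tendstoI)
      fix r :: real assume "0 < r"
      then obtain j :: nat where j: "\<delta> j < r"
        using reals_Archimedean by (auto simp: \<delta>_def inverse_eq_divide add.commute)
      from spec[OF up, of j] spec[OF lo, of j] eventually_gt_at_top[of "0 :: nat"]
      show "\<forall>\<^sub>F n in sequentially. dist (birkhoff_sum f g n x / real n) I < r"
      proof eventually_elim
        fix n :: nat assume "0 < n"
          and "birkhoff_sum f g n x \<le> real n * (I + \<delta> j)" "real n * (I - \<delta> j) \<le> birkhoff_sum f g n x"
        then have "\<bar>birkhoff_sum f g n x / real n - I\<bar> \<le> \<delta> j"
          by (simp add: abs_le_iff field_simps)
        with j show "dist (birkhoff_sum f g n x / real n) I < r"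
          by (simp add: dist_real_def)
      qed
    qed
  qed
qed

lemma AE_visit_frequency_tendsto:
  assumes "A \<in> sets m"
  shows "AE x in m. (\<lambda>l. birkhoff_sum f (indicator A) l x / real l) \<longlonglongrightarrow> measure m A"
  using AE_birkhoff_average_tendsto[of "indicator A" 1] assms by (simp add: space_eq_UNIV)

end

lemma integral_empirical:
  fixes h :: "'a \<Rightarrow> real"
  assumes "0 < l"
  shows "(\<integral>y. h y \<partial>empirical f l x) = birkhoff_sum f h l x / real l"
proof -
  have "{..<l} \<noteq> {}" using assms by auto
  moreover from this have "empirical f l x = measure_pmf (map_pmf (\<lambda>i. (f ^^ i) x) (pmf_of_set {..<l}))"
    unfolding empirical_def by (simp add: map_pmf_of_set)
  ultimately show ?thesis by (simp add: integral_pmf_of_set birkhoff_sum_def)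
qed

lemma abs_le_sup_norm: "bounded (range g) \<Longrightarrow> \<bar>g x\<bar> \<le> sup_norm g"
  unfolding sup_norm_def bounded_real by (intro cSUP_upper2[where x = x]) (auto intro: bdd_aboveI2)

lemma (in prob_space) abs_integral_le_sup_norm:
  assumes "g \<in> borel_measurable M" and "bounded (range g)"
  shows "\<bar>\<integral>x. g x \<partial>M\<bar> \<le> sup_norm g"
proof -
  have bound: "\<bar>g x\<bar> \<le> sup_norm g" for x
    using assms(2) by (rule abs_le_sup_norm)
  have lower: "- sup_norm g \<le> g x" for x
    using bound[of x] by linarith
  have "integrable M g"
    using assms(1) bound by (intro integrable_const_bound[where B = "sup_norm g"]) auto
  moreover have "(\<integral>x. g x \<partial>M) \<le> sup_norm g"
    using \<open>integrable M g\<close> by (rule integral_le_const) (simp add: abs_le_D1[OF bound])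
  moreover have "- sup_norm g \<le> (\<integral>x. g x \<partial>M)"
    using \<open>integrable M g\<close> by (rule integral_ge_const) (simp add: lower)
  ultimately show ?thesis by linarith
qed

text \<open>Termwise convergence of the series defining \<open>Dmet\<close>, dominated by \<open>2\<^sup>-\<^sup>i\<close>
  (Tannery's theorem).\<close>
lemma Dmet_empirical_tendsto_0:
  fixes \<phi> :: "nat \<Rightarrow> 'a \<Rightarrow> real"
  assumes bound: "\<And>i y. \<bar>\<phi> i y\<bar> \<le> sup_norm (\<phi> i)"
    and integral_bound: "\<And>i. \<bar>\<integral>y. \<phi> i y \<partial>\<mu>\<bar> \<le> sup_norm (\<phi> i)"
    and lim: "\<And>i. (\<lambda>l. birkhoff_sum f (\<phi> i) l x / real l) \<longlonglongrightarrow> (\<integral>y. \<phi> i y \<partial>\<mu>)"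
  shows "(\<lambda>l. Dmet \<phi> (empirical f l x) \<mu>) \<longlonglongrightarrow> 0"
proof -
  define a where "a i l = \<bar>birkhoff_sum f (\<phi> i) l x / real l - (\<integral>y. \<phi> i y \<partial>\<mu>)\<bar>
    / (2 ^ (i + 2) * sup_norm (\<phi> i))" for i l
  have "\<forall>\<^sub>F l in sequentially. Dmet \<phi> (empirical f l x) \<mu> = (\<Sum>i. a i l)"
    using eventually_ge_at_top[of 1] by eventually_elim (simp add: Dmet_def integral_empirical a_def)
  moreover have "(\<lambda>l. a i l) \<longlonglongrightarrow> 0" for i
    unfolding a_def by (intro tendsto_divide_zero tendsto_rabs_zero LIM_zero lim)
  moreover have bound_a: "norm (a i l) \<le> (1 / 2) ^ i" if "1 \<le> l" for i l
  proof -
    have "\<bar>birkhoff_sum f (\<phi> i) l x\<bar> \<le> (\<Sum>j<l. \<bar>\<phi> i ((f ^^ j) x)\<bar>)"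
      unfolding birkhoff_sum_def by (rule sum_abs)
    also have "\<dots> \<le> real l * sup_norm (\<phi> i)"
      using sum_mono[of "{..<l}" "\<lambda>j. \<bar>\<phi> i ((f ^^ j) x)\<bar>" "\<lambda>_. sup_norm (\<phi> i)"] bound by simp
    finally have "\<bar>birkhoff_sum f (\<phi> i) l x / real l\<bar> \<le> sup_norm (\<phi> i)"
      using that by (simp add: abs_div pos_divide_le_eq mult.commute)
    then have "\<bar>birkhoff_sum f (\<phi> i) l x / real l - (\<integral>y. \<phi> i y \<partial>\<mu>)\<bar> \<le> 2 * sup_norm (\<phi> i)"
      using integral_bound[of i] by linarith
    then have "a i l \<le> 2 * sup_norm (\<phi> i) / (2 ^ (i + 2) * sup_norm (\<phi> i))"
      unfolding a_def by (rule divide_right_mono) (use bound[of i x] in simp)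
    also have "\<dots> \<le> (1 / 2) ^ i"
      by (cases "sup_norm (\<phi> i) = 0") (simp_all add: power_add field_simps)
    finally show ?thesis
      using bound[of i x] by (simp add: a_def)
  qed
  moreover have "\<forall>\<^sub>F p in at_top \<times>\<^sub>F sequentially. True \<and> 1 \<le> snd p"
    by (intro eventually_prodI) simp_all
  then have "\<forall>\<^sub>F (i, l) in at_top \<times>\<^sub>F sequentially. norm (a i l) \<le> (1 / 2) ^ i"
    by eventually_elim (use bound_a in auto)
  ultimately show ?thesis
    using tannerys_theorem[of a "\<lambda>_. 0" sequentially "\<lambda>i. (1 / 2) ^ i"]
    by (simp add: summable_geometric tendsto_cong)
qed

lemma birkhoff_sum_indicator_less_imp_visit:
  assumes "birkhoff_sum f (indicator A) n x < birkhoff_sum f (indicator A) p x"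
  shows "\<exists>q. n \<le> q \<and> q < p \<and> (f ^^ q) x \<in> A"
proof (rule ccontr)
  assume no_visit: "\<not> ?thesis"
  have "birkhoff_sum f (indicator A) p x \<le> birkhoff_sum f (indicator A) n x"
  proof (cases "p \<le> n")
    case True
    then show ?thesis
      unfolding birkhoff_sum_def by (intro sum_mono2) auto
  next
    case False
    then have "birkhoff_sum f (indicator A) p x
        = birkhoff_sum f (indicator A) n x + (\<Sum>i<p - n. indicator A ((f ^^ (n + i)) x))"
      unfolding birkhoff_sum_def using sum_lessThan_add[of _ n "p - n"] by simp
    also have "\<dots> = birkhoff_sum f (indicator A) n x"
      using no_visit by (simp add: indicator_def)
    finally show ?thesis by simp
  qed
  with assms show False by simp
qed

text \<open>If \<open>S\<^sub>l/l \<rightarrow> a > 0\<close>, the visit count strictly grows between times \<open>n\<close> and \<open>(1 + \<gamma>) n\<close>;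
  the tolerance \<open>e\<close> is chosen so that \<open>(1 + \<gamma>)(a - e) - (a + e) = \<gamma> a / 2\<close>.\<close>
lemma eventually_return_within:
  assumes lim: "(\<lambda>l. birkhoff_sum f (indicator A) l x / real l) \<longlonglongrightarrow> a"
    and "0 < a" and "0 < \<gamma>"
  shows "\<forall>\<^sub>F n in sequentially. \<exists>q. n \<le> q \<and> real q \<le> (1 + \<gamma>) * real n \<and> (f ^^ q) x \<in> A"
proof -
  define S where "S l = birkhoff_sum f (indicator A) l x" for l
  define e where "e = \<gamma> * a / (2 * (2 + \<gamma>))"
  have "0 < e" "e < a"
    using \<open>0 < a\<close> \<open>0 < \<gamma>\<close> by (auto simp: e_def field_simps add_pos_pos)
  obtain N where N: "\<And>l. N \<le> l \<Longrightarrow> \<bar>S l / real l - a\<bar> < e"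
    using LIMSEQ_D[OF lim \<open>0 < e\<close>] unfolding S_def by auto
  have "\<exists>q. n \<le> q \<and> real q \<le> (1 + \<gamma>) * real n \<and> (f ^^ q) x \<in> A" if n: "max N 1 \<le> n" for n
  proof -
    define Q where "Q = nat \<lfloor>(1 + \<gamma>) * real n\<rfloor>"
    have "real Q = of_int \<lfloor>(1 + \<gamma>) * real n\<rfloor>"
      using \<open>0 < \<gamma>\<close> unfolding Q_def by simp
    then have Q: "real Q \<le> (1 + \<gamma>) * real n" "(1 + \<gamma>) * real n < real Q + 1"
      using of_int_floor_le real_of_int_floor_add_one_gt by simp_all
    moreover have "real n \<le> (1 + \<gamma>) * real n"
      using mult_right_mono[of 1 "1 + \<gamma>" "real n"] \<open>0 < \<gamma>\<close> by simp
    ultimately have "n \<le> Q"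
      by linarith
    have "S n / real n < a + e" "a - e < S (Q + 1) / real (Q + 1)"
      using N[of n] N[of "Q + 1"] \<open>n \<le> Q\<close> n by (auto simp: abs_less_iff)
    then have "S n < (a + e) * real n" "(a - e) * real (Q + 1) < S (Q + 1)"
      using n by (simp_all add: pos_divide_less_eq pos_less_divide_eq)
    have "S n < real n * (a + e)"
      using \<open>S n < (a + e) * real n\<close> by (simp add: mult.commute)
    also have "\<dots> \<le> (1 + \<gamma>) * real n * (a - e)"
      using \<open>0 < a\<close> \<open>0 < \<gamma>\<close> by (simp add: e_def field_simps)
    also have "\<dots> \<le> (real Q + 1) * (a - e)"
      using Q(2) \<open>e < a\<close> by (intro mult_right_mono) auto
    also have "\<dots> < S (Q + 1)"
      using \<open>(a - e) * real (Q + 1) < S (Q + 1)\<close> by (simp only: of_nat_add of_nat_1 mult.commute)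
    finally have "birkhoff_sum f (indicator A) n x < birkhoff_sum f (indicator A) (Q + 1) x"
      unfolding S_def .
    from birkhoff_sum_indicator_less_imp_visit[OF this]
    obtain q where "n \<le> q" "q < Q + 1" "(f ^^ q) x \<in> A"
      by blast
    with Q(1) show ?thesis
      by (intro exI[of _ q]) auto
  qed
  then show ?thesis
    by (intro eventually_sequentiallyI)
qed

lemma (in prob_space) measure_tendsto_1_of_AE_eventually:
  assumes sets: "\<And>n. A n \<in> events"
    and AE_eventually: "AE x in M. \<forall>\<^sub>F n in sequentially. x \<in> A n"
  shows "(\<lambda>n. prob (A n)) \<longlonglongrightarrow> 1"
proof -
  define H where "H N = (\<Inter>n\<in>{N..}. A n)" for N
  have H_sets: "H N \<in> events" for N
    unfolding H_def using sets by (intro sets.countable_INT) auto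
  have "AE x in M. x \<in> (\<Union>N. H N)"
    using AE_eventually
  proof eventually_elim
    fix x assume "\<forall>\<^sub>F n in sequentially. x \<in> A n"
    then obtain N where "\<forall>n\<ge>N. x \<in> A n"
      unfolding eventually_sequentially by blast
    then show "x \<in> (\<Union>N. H N)"
      unfolding H_def by blast
  qed
  then have "prob (\<Union>N. H N) = 1"
    using H_sets by (subst prob_eq_1) auto
  moreover have "incseq H"
    unfolding incseq_def H_def by auto
  ultimately have "(\<lambda>N. prob (H N)) \<longlonglongrightarrow> 1"
    using finite_Lim_measure_incseq[of H] H_sets by auto
  then show ?thesis
  proof (rule tendsto_sandwich[OF _ _ _ tendsto_const, rotated 2])
    show "\<forall>\<^sub>F n in sequentially. prob (H n) \<le> prob (A n)"
      using H_sets sets by (intro always_eventually allI finite_measure_mono) (auto simp: H_def)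
    show "\<forall>\<^sub>F n in sequentially. prob (A n) \<le> 1"
      by (intro always_eventually allI prob_le_1)
  qed
qed

lemma (in prob_space) AE_in_partition_positive:
  assumes "finite P" and "P \<subseteq> events"
  shows "AE y in M. \<forall>A\<in>P. y \<in> A \<longrightarrow> 0 < prob A"
proof (rule AE_finite_allI[OF \<open>finite P\<close>])
  fix A assume "A \<in> P"
  show "AE y in M. y \<in> A \<longrightarrow> 0 < prob A"
  proof (cases "prob A = 0")
    case True
    then have "A \<in> null_sets M"
      using \<open>A \<in> P\<close> assms(2) by (auto simp: emeasure_eq_measure null_setsI)
    from AE_not_in[OF this] show ?thesis
      by eventually_elim simp
  qed (simp add: zero_less_measure_iff)
qed

lemma (in ergodic_system) Lambda_set_measurable:
  assumes "finite P" and "P \<subseteq> sets m" and "\<And>i. \<phi> i \<in> borel_measurable m"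
  shows "Lambda_set \<phi> f P \<gamma> k \<mu> n \<in> sets m"
proof -
  have [measurable]: "(\<lambda>x. Dmet \<phi> (empirical f l x) \<mu>) \<in> borel_measurable m" for l
  proof (cases "l = 0")
    case True
    then show ?thesis by (simp add: empirical_def)
  next
    case False
    then have "(\<lambda>x. Dmet \<phi> (empirical f l x) \<mu>) = (\<lambda>x. \<Sum>i. \<bar>birkhoff_sum f (\<phi> i) l x / real l
        - (\<integral>y. \<phi> i y \<partial>\<mu>)\<bar> / (2 ^ (i + 2) * sup_norm (\<phi> i)))"
      by (simp add: Dmet_def integral_empirical)
    then show ?thesis
      using assms(3) by simp
  qed
  have [measurable]: "Measurable.pred m (\<lambda>x. \<exists>A\<in>P. x \<in> A \<and> (f ^^ q) x \<in> A)" for q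
  proof (rule pred_intros_finite(4)[OF \<open>finite P\<close>])
    fix A assume "A \<in> P"
    then have "A \<inter> ((f ^^ q) -` A \<inter> space m) \<in> sets m"
      using assms(2) measurable_sets[OF measurable_funpow] by auto
    then show "Measurable.pred m (\<lambda>x. x \<in> A \<and> (f ^^ q) x \<in> A)"
      unfolding pred_def by (simp add: space_eq_UNIV Int_def)
  qed
  have "Measurable.pred m (\<lambda>x. (\<exists>q::nat. n \<le> q \<and> real q \<le> (1 + \<gamma>) * real n
      \<and> (\<exists>A\<in>P. x \<in> A \<and> (f ^^ q) x \<in> A)) \<and> (\<forall>l\<ge>n. Dmet \<phi> (empirical f l x) \<mu> < 1 / real k))"
    by measurable
  then show ?thesis
    unfolding Lambda_set_def pred_def by (simp add: space_eq_UNIV)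
qed

lemma eventually_in_Lambda_set:
  assumes bound: "\<And>i y. \<bar>\<phi> i y\<bar> \<le> sup_norm (\<phi> i)"
    and integral_bound: "\<And>i. \<bar>\<integral>y. \<phi> i y \<partial>\<mu>\<bar> \<le> sup_norm (\<phi> i)"
    and lim: "\<And>i. (\<lambda>l. birkhoff_sum f (\<phi> i) l x / real l) \<longlonglongrightarrow> (\<integral>y. \<phi> i y \<partial>\<mu>)"
    and "A \<in> P" and "x \<in> A"
    and lim_A: "(\<lambda>l. birkhoff_sum f (indicator A) l x / real l) \<longlonglongrightarrow> a"
    and "0 < a" and "0 < \<gamma>" and "0 < k"
  shows "\<forall>\<^sub>F n in sequentially. x \<in> Lambda_set \<phi> f P \<gamma> k \<mu> n"
proof -
  have "(\<lambda>l. Dmet \<phi> (empirical f l x) \<mu>) \<longlonglongrightarrow> 0"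
    using bound integral_bound lim by (rule Dmet_empirical_tendsto_0)
  then have "\<forall>\<^sub>F l in sequentially. Dmet \<phi> (empirical f l x) \<mu> < 1 / real k"
    using \<open>0 < k\<close> by (intro order_tendstoD(2)) auto
  then have "\<forall>\<^sub>F n in sequentially. \<forall>l\<ge>n. Dmet \<phi> (empirical f l x) \<mu> < 1 / real k"
    unfolding eventually_sequentially by (meson order_trans)
  moreover have "\<forall>\<^sub>F n in sequentially. \<exists>q. n \<le> q \<and> real q \<le> (1 + \<gamma>) * real n \<and> (f ^^ q) x \<in> A"
    using lim_A \<open>0 < a\<close> \<open>0 < \<gamma>\<close> by (rule eventually_return_within)
  ultimately show ?thesis
    by eventually_elim (use \<open>A \<in> P\<close> \<open>x \<in> A\<close> in \<open>auto simp: Lambda_set_def\<close>)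
qed

theorem lemma4p5:
  fixes f :: "'a::metric_space \<Rightarrow> 'a" and m :: "'a measure"
    and P :: "'a set set" and \<gamma> :: real and k :: nat
    and \<phi> :: "nat \<Rightarrow> 'a \<Rightarrow> real"
  assumes "compact (UNIV :: 'a set)"
    and "continuous_on UNIV f"
    and "prob_space m" and "sets m = sets borel"
    and "ergodic_measure f m"
    and "finite_measurable_partition P"
    and "0 < \<gamma>" and "\<gamma> < 1" and "0 < k"
    and "\<And>i. continuous_on UNIV (\<phi> i)"
    and "\<And>g e. continuous_on UNIV g \<Longrightarrow> 0 < e \<Longrightarrow> \<exists>i. \<forall>x. \<bar>\<phi> i x - g x\<bar> < e"
  shows "(\<lambda>n. measure m (Lambda_set \<phi> f P \<gamma> k m n)) \<longlonglongrightarrow> 1"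
proof -
  interpret prob_space m
    by fact
  interpret ergodic_system m f
    using assms(5) sets_eq_imp_space_eq[OF assms(4)]
    by unfold_locales (auto simp: ergodic_measure_def invariant_measure_def)
  have P: "finite P" "P \<subseteq> sets m" "\<Union>P = UNIV"
    using assms(4,6) unfolding finite_measurable_partition_def by auto
  have \<phi>_measurable: "\<phi> i \<in> borel_measurable m" for i
    using borel_measurable_continuous_onI[OF assms(10)] measurable_cong_sets[OF assms(4) refl] by metis
  have \<phi>_bounded: "bounded (range (\<phi> i))" for i
    using compact_imp_bounded[OF compact_continuous_image[OF assms(10,1)]] .
  have "AE x in m. \<forall>i. (\<lambda>l. birkhoff_sum f (\<phi> i) l x / real l) \<longlonglongrightarrow> (\<integral>y. \<phi> i y \<partial>m)"
    unfolding AE_all_countable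
    using \<phi>_measurable abs_le_sup_norm[OF \<phi>_bounded] by (blast intro: AE_birkhoff_average_tendsto)
  moreover have "AE x in m. \<forall>A\<in>P. (\<lambda>l. birkhoff_sum f (indicator A) l x / real l) \<longlonglongrightarrow> measure m A"
    using P(1) by (rule AE_finite_allI) (use P(2) in \<open>blast intro: AE_visit_frequency_tendsto\<close>)
  moreover have "AE x in m. \<forall>A\<in>P. x \<in> A \<longrightarrow> 0 < measure m A"
    using P(1,2) by (rule AE_in_partition_positive)
  ultimately have "AE x in m. \<forall>\<^sub>F n in sequentially. x \<in> Lambda_set \<phi> f P \<gamma> k m n"
  proof eventually_elim
    case (elim x)
    obtain A where "A \<in> P" "x \<in> A"
      using P(3) by blast
    with elim show ?case
      by (intro eventually_in_Lambda_set[where a = "measure m A"] abs_le_sup_norm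
          abs_integral_le_sup_norm \<phi>_measurable \<phi>_bounded assms(7,9)) auto
  qed
  then show ?thesis
    by (intro measure_tendsto_1_of_AE_eventually Lambda_set_measurable P(1,2) \<phi>_measurable)
qed

end
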